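(* Let $k$ be a field and let $M$ be a finitely generated, commutative, cancellative monoid whose group completion $M^{\mathrm{gp}}$ is torsion-free, and let $X=\operatorname{Spec} k[M]$. Let $M^\times\subseteq M$ be the group of units of $M$ and $Y=\operatorname{Spec} k[M^\times]$. Let $\pi\colon X\to Y$ be the morphism induced by the inclusion $M^\times\hookrightarrow M$, and let $i\colon Y\to X$ be the morphism induced by the monoid map $M\to M^\times\cup\{0\}$ that is the identity on $M^\times$ and sends $M\setminus M^\times$ to $0$. Then $i$ and $\pi$ are mutually inverse naive $\mathbf A^1$-homotopy equivalences: $\pi\circ i=\mathrm{id}_Y$, and $i\circ\pi$ is naively $\mathbf A^1$-homotopic to $\mathrm{id}_X$.
   Context: Two morphisms $f,g\colon X\to X'$ of $k$-schemes are naively $\mathbf A^1$-homotopic if they are related by the equivalence relation generated by: $f\sim g$ whenever there is a morphism $h\colon \mathbf A^1_k\times_k X\to X'$ with $h|_{\{0\}\times X}=f$ and $h|_{\{1\}\times X}=g$. Such an $X$ is called a split affine toric variety; $i$ embeds $Y$ as the unique closed torus orbit of $X$. *)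

theory Defs
  imports "HOL-Library.Poly_Mapping" "HOL-Computational_Algebra.Polynomial"
begin

(* The monoid algebra k[M] of a commutative monoid M (written additively, as the
  type 'm) over a field k is the type ('m \<Rightarrow>\<^sub>0 'k) of finitely supported functions
  with convolution product.  Its k-algebra structure map is c \<mapsto> c e_0. *)

definition kmon :: "'k::zero \<Rightarrow> ('m::zero \<Rightarrow>\<^sub>0 'k)" where
  "kmon c = Poly_Mapping.single 0 c"

(* The k-algebra structure map of A[t] = k[M][t], the coordinate ring of A^1 x X. *)
definition kmon_poly :: "'k::zero \<Rightarrow> ('m::zero \<Rightarrow>\<^sub>0 'k) poly" where
  "kmon_poly c = [: kmon c :]"

definition kalg_hom :: "('k \<Rightarrow> 'a::comm_ring_1) \<Rightarrow> ('k \<Rightarrow> 'b::comm_ring_1) \<Rightarrow> ('a \<Rightarrow> 'b) \<Rightarrow> bool" where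
  "kalg_hom \<sigma> \<tau> \<phi> \<longleftrightarrow>
     (\<forall>x y. \<phi> (x + y) = \<phi> x + \<phi> y) \<and> (\<forall>x y. \<phi> (x * y) = \<phi> x * \<phi> y) \<and>
     \<phi> 1 = 1 \<and> (\<forall>c. \<phi> (\<sigma> c) = \<tau> c)"

(* Algebra map k[M] \<rightarrow> k[N] induced by a pointed monoid map g : M \<rightarrow> N \<union> {0}
  (None plays the role of the adjoined zero): e_m \<mapsto> e_{g m}, resp. 0 if g m = None. *)
definition alg_ind :: "('m \<Rightarrow> 'n option) \<Rightarrow> ('m \<Rightarrow>\<^sub>0 'k::comm_ring_1) \<Rightarrow> ('n::zero \<Rightarrow>\<^sub>0 'k)" where
  "alg_ind g f = (\<Sum>m\<in>Poly_Mapping.keys f. case g m of None \<Rightarrow> 0 | Some n \<Rightarrow> Poly_Mapping.single n (Poly_Mapping.lookup f m))"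

(* The monoid map M \<rightarrow> M^\<times> \<union> {0}: identity on units (identified with the type 'u
  via iota), and non-units go to 0 (= None). *)
definition unit_retr :: "('u \<Rightarrow> 'm) \<Rightarrow> 'm \<Rightarrow> 'u option" where
  "unit_retr \<iota> m = (if m \<in> range \<iota> then Some (inv \<iota> m) else None)"

definition mon_units :: "'m::comm_monoid_add set" where
  "mon_units = {m. \<exists>n. m + n = 0}"

inductive_set mon_gen :: "'m::monoid_add set \<Rightarrow> 'm set" for S where
  zero: "0 \<in> mon_gen S"
| gen: "s \<in> S \<Longrightarrow> s \<in> mon_gen S"
| add: "a \<in> mon_gen S \<Longrightarrow> b \<in> mon_gen S \<Longrightarrow> a + b \<in> mon_gen S"

definition fin_gen_monoid :: "'m::monoid_add itself \<Rightarrow> bool" where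
  "fin_gen_monoid _ \<longleftrightarrow> (\<exists>S::'m set. finite S \<and> mon_gen S = UNIV)"

definition nsmul :: "nat \<Rightarrow> 'm::comm_monoid_add \<Rightarrow> 'm" where
  "nsmul n a = (\<Sum>i<n. a)"

(* For a cancellative commutative monoid M, the group completion M^gp is torsion-free
  iff for all a b \<in> M and n > 0, n.a = n.b implies a = b (elements of M^gp are a - b,
  and n(a - b) = 0 in M^gp iff n.a = n.b in M by cancellativity). *)
definition gp_torsion_free :: "'m::cancel_comm_monoid_add itself \<Rightarrow> bool" where
  "gp_torsion_free _ \<longleftrightarrow> (\<forall>(a::'m) b n. n > 0 \<longrightarrow> nsmul n a = nsmul n b \<longrightarrow> a = b)"

(* Naive A^1-homotopy of morphisms Spec k[M] \<rightarrow> Spec k[M], expressed on the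
  corresponding k-algebra endomorphisms of k[M] (anti-equivalence of affine k-schemes
  and k-algebras; A^1 x Spec k[M] = Spec k[M][t]; restriction to {0} x X, {1} x X is
  evaluation at t = 0, 1). *)
definition naive_htpy_step :: "(('m::comm_monoid_add \<Rightarrow>\<^sub>0 'k::field) \<Rightarrow> ('m \<Rightarrow>\<^sub>0 'k)) \<Rightarrow>
    (('m \<Rightarrow>\<^sub>0 'k) \<Rightarrow> ('m \<Rightarrow>\<^sub>0 'k)) \<Rightarrow> bool" where
  "naive_htpy_step f g \<longleftrightarrow>
     (\<exists>H. kalg_hom kmon kmon_poly H \<and> (\<lambda>a. poly (H a) 0) = f \<and> (\<lambda>a. poly (H a) 1) = g)"

definition naive_A1_homotopic :: "(('m::comm_monoid_add \<Rightarrow>\<^sub>0 'k::field) \<Rightarrow> ('m \<Rightarrow>\<^sub>0 'k)) \<Rightarrow>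
    (('m \<Rightarrow>\<^sub>0 'k) \<Rightarrow> ('m \<Rightarrow>\<^sub>0 'k)) \<Rightarrow> bool" where
  "naive_A1_homotopic = equivclp naive_htpy_step"

end

theory Submission
  imports Defs
begin

text \<open>
  The first identity holds because \<open>alg_ind\<close> is functorial and the composite pointed monoid map
  \<open>M\<^sup>\<times> \<rightarrow> M \<rightarrow> M\<^sup>\<times> \<union> {0}\<close> is the identity.

  For the homotopy, choose a monoid homomorphism \<open>\<phi> : M \<rightarrow> \<nat>\<close> with \<open>\<phi>\<^sup>-\<^sup>1(0) = M\<^sup>\<times>\<close>. Then
  \<open>e\<^sub>m \<mapsto> e\<^sub>m t\<^bsup>\<phi> m\<^esup>\<close> is a \<open>k\<close>-algebra map \<open>k[M] \<rightarrow> k[M][t]\<close>; at \<open>t = 1\<close> it is the identity,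
  and at \<open>t = 0\<close> it keeps exactly the monomials of units, so it is \<open>i \<circ> \<pi>\<close>.

  Such a grading exists on every finitely generated cancellative commutative monoid. For generators
  \<open>g\<^sub>1, \<dots>, g\<^sub>n\<close> it is an integral weight vector which is orthogonal to the relations among the
  \<open>g\<^sub>i\<close> modulo units and to the unit generators, and positive on the non-unit generators. If no
  such vector existed, a theorem of the alternative over \<open>\<rat>\<close> (proved by Fourier--Motzkin
  elimination) would give a nonnegative combination of the non-unit coordinate vectors, with a
  positive coefficient somewhere, lying in the span of those relations; clearing denominators and
  cancelling exhibits a unit as a sum in which a non-unit generator occurs, which is impossible.
\<close>

section \<open>Rational cones and a theorem of the alternative\<close>

text \<open>Vectors of \<open>\<rat>\<^sup>n\<close> are represented by functions \<open>nat \<Rightarrow> rat\<close>; \<open>dotp n\<close> and \<open>cone_meets n\<close>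
  ignore all coordinates from \<open>n\<close> on.\<close>

definition dotp :: "nat \<Rightarrow> (nat \<Rightarrow> rat) \<Rightarrow> (nat \<Rightarrow> rat) \<Rightarrow> rat" where
  "dotp n a w = (\<Sum>k<n. a k * w k)"

lemma dotp_Suc: "dotp (Suc n) a w = dotp n a w + a n * w n"
  by (simp add: dotp_def)

lemma dotp_fun_upd [simp]: "dotp n a (w(n := t)) = dotp n a w"
  by (simp add: dotp_def)

lemma dotp_linear: "dotp n (\<lambda>k. a * x k + b * y k) w = a * dotp n x w + b * dotp n y w"
  by (simp add: dotp_def algebra_simps sum.distrib sum_distrib_left)

definition rat_subspace :: "(nat \<Rightarrow> rat) set \<Rightarrow> bool" where
  "rat_subspace E \<longleftrightarrow>
     (\<lambda>k. 0) \<in> E \<and> (\<forall>x\<in>E. \<forall>y\<in>E. \<forall>a b. (\<lambda>k. a * x k + b * y k) \<in> E)"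

lemma rat_subspace_lincomb:
  "rat_subspace E \<Longrightarrow> x \<in> E \<Longrightarrow> y \<in> E \<Longrightarrow> (\<lambda>k. a * x k + b * y k) \<in> E"
  unfolding rat_subspace_def by blast

definition rat_linear :: "((nat \<Rightarrow> rat) \<Rightarrow> (nat \<Rightarrow> rat)) \<Rightarrow> bool" where
  "rat_linear T \<longleftrightarrow> (\<forall>a b x y. T (\<lambda>k. a * x k + b * y k) = (\<lambda>k. a * T x k + b * T y k))"

lemma rat_linearD: "rat_linear T \<Longrightarrow> T (\<lambda>k. a * x k + b * y k) = (\<lambda>k. a * T x k + b * T y k)"
  unfolding rat_linear_def by blast

lemma rat_linear_zero: "rat_linear T \<Longrightarrow> T (\<lambda>k. 0) = (\<lambda>k. 0)"
  using rat_linearD[of T 0 _ 0] by simp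

lemma rat_subspace_image:
  assumes T: "rat_linear T" and E: "rat_subspace E"
  shows "rat_subspace (T ` E)"
  unfolding rat_subspace_def
proof (intro conjI ballI allI)
  show "(\<lambda>k. 0) \<in> T ` E"
    using E rat_linear_zero[OF T] unfolding rat_subspace_def by force
next
  fix x y a b assume "x \<in> T ` E" "y \<in> T ` E"
  then obtain x' y' where "x' \<in> E" "y' \<in> E" "x = T x'" "y = T y'" by blast
  then have "(\<lambda>k. a * x k + b * y k) = T (\<lambda>k. a * x' k + b * y' k)"
    using rat_linearD[OF T] by simp
  moreover have "(\<lambda>k. a * x' k + b * y' k) \<in> E"
    using rat_subspace_lincomb[OF E] \<open>x' \<in> E\<close> \<open>y' \<in> E\<close> by blast
  ultimately show "(\<lambda>k. a * x k + b * y k) \<in> T ` E" by blast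
qed

inductive_set nonneg_comb :: "(nat \<Rightarrow> rat) set \<Rightarrow> (nat \<Rightarrow> rat) set" for R where
  zero: "(\<lambda>k. 0) \<in> nonneg_comb R"
| step: "r \<in> R \<Longrightarrow> c \<ge> 0 \<Longrightarrow> u \<in> nonneg_comb R \<Longrightarrow> (\<lambda>k. c * r k + u k) \<in> nonneg_comb R"

definition pos_comb :: "(nat \<Rightarrow> rat) set \<Rightarrow> (nat \<Rightarrow> rat) set" where
  "pos_comb R = {v. \<exists>r\<in>R. \<exists>c>0. \<exists>u\<in>nonneg_comb R. v = (\<lambda>k. c * r k + u k)}"

lemma pos_combI: "r \<in> R \<Longrightarrow> c > 0 \<Longrightarrow> u \<in> nonneg_comb R \<Longrightarrow> (\<lambda>k. c * r k + u k) \<in> pos_comb R"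
  unfolding pos_comb_def by blast

lemma nonneg_comb_add:
  "u \<in> nonneg_comb R \<Longrightarrow> v \<in> nonneg_comb R \<Longrightarrow> (\<lambda>k. u k + v k) \<in> nonneg_comb R"
proof (induction u rule: nonneg_comb.induct)
  case zero
  then show ?case by simp
next
  case (step r c u)
  then have "(\<lambda>k. c * r k + (u k + v k)) \<in> nonneg_comb R"
    by (intro nonneg_comb.step) auto
  then show ?case by (simp add: add.assoc)
qed

lemma nonneg_comb_scale:
  "u \<in> nonneg_comb R \<Longrightarrow> c \<ge> 0 \<Longrightarrow> (\<lambda>k. c * u k) \<in> nonneg_comb R"
proof (induction u rule: nonneg_comb.induct)
  case zero
  then show ?case by (simp add: nonneg_comb.zero)
next
  case (step r d u)
  then have "(\<lambda>k. (c * d) * r k + c * u k) \<in> nonneg_comb R"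
    by (intro nonneg_comb.step) auto
  then show ?case by (simp add: algebra_simps)
qed

lemma nonneg_comb_subset:
  "u \<in> nonneg_comb R' \<Longrightarrow> R' \<subseteq> nonneg_comb R \<Longrightarrow> u \<in> nonneg_comb R"
proof (induction u rule: nonneg_comb.induct)
  case zero
  then show ?case by (simp add: nonneg_comb.zero)
next
  case (step r c u)
  then show ?case using nonneg_comb_add[OF nonneg_comb_scale] by auto
qed

lemma nonneg_comb_coord_zero:
  "u \<in> nonneg_comb R \<Longrightarrow> \<forall>r\<in>R. r n = 0 \<Longrightarrow> u n = 0"
  by (induction u rule: nonneg_comb.induct) auto

lemma nonneg_comb_image:
  assumes T: "rat_linear T"
  shows "u \<in> nonneg_comb (T ` R) \<Longrightarrow> \<exists>v\<in>nonneg_comb R. u = T v"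
proof (induction u rule: nonneg_comb.induct)
  case zero
  then show ?case using rat_linear_zero[OF T] nonneg_comb.zero by metis
next
  case (step r c u)
  then obtain r' v where "r' \<in> R" "r = T r'" "v \<in> nonneg_comb R" "u = T v" by blast
  moreover from this have "(\<lambda>k. c * r k + u k) = T (\<lambda>k. c * r' k + v k)"
    using rat_linearD[OF T, of c r' 1 v] by simp
  ultimately show ?case using step.hyps(2) nonneg_comb.step by blast
qed

lemma pos_comb_image:
  assumes T: "rat_linear T" and u: "u \<in> pos_comb (T ` R)"
  shows "\<exists>v\<in>pos_comb R. u = T v"
proof -
  obtain r c w where "r \<in> T ` R" "c > 0" "w \<in> nonneg_comb (T ` R)" "u = (\<lambda>k. c * r k + w k)"
    using u unfolding pos_comb_def by blast
  moreover obtain r' where "r' \<in> R" "r = T r'"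
    using \<open>r \<in> T ` R\<close> by blast
  moreover obtain v where "v \<in> nonneg_comb R" "w = T v"
    using nonneg_comb_image[OF T \<open>w \<in> nonneg_comb (T ` R)\<close>] by blast
  moreover have "(\<lambda>k. c * r k + w k) = T (\<lambda>k. c * r' k + v k)"
    using rat_linearD[OF T, of c r' 1 v] \<open>r = T r'\<close> \<open>w = T v\<close> by simp
  ultimately show ?thesis using pos_combI by blast
qed

lemma pos_comb_subset_nonneg_comb: "pos_comb R \<subseteq> nonneg_comb R"
  unfolding pos_comb_def using nonneg_comb.step less_imp_le by blast

lemma pos_comb_subset:
  assumes "R' \<subseteq> pos_comb R"
  shows "pos_comb R' \<subseteq> pos_comb R"
proof
  fix v assume "v \<in> pos_comb R'"
  then obtain r' c u where "r' \<in> R'" "c > 0" "u \<in> nonneg_comb R'" "v = (\<lambda>k. c * r' k + u k)"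
    unfolding pos_comb_def by blast
  moreover from this assms obtain r c' u' where
    "r \<in> R" "c' > 0" "u' \<in> nonneg_comb R" "r' = (\<lambda>k. c' * r k + u' k)"
    unfolding pos_comb_def by blast
  moreover have "u \<in> nonneg_comb R"
    using nonneg_comb_subset \<open>u \<in> nonneg_comb R'\<close> assms pos_comb_subset_nonneg_comb by blast
  ultimately have "v = (\<lambda>k. (c * c') * r k + (c * u' k + u k))"
    by (simp add: algebra_simps)
  moreover have "(\<lambda>k. c * u' k + u k) \<in> nonneg_comb R"
    using \<open>c > 0\<close> \<open>u' \<in> nonneg_comb R\<close> \<open>u \<in> nonneg_comb R\<close>
    by (intro nonneg_comb_add nonneg_comb_scale) auto
  ultimately show "v \<in> pos_comb R"
    using pos_combI[of r R "c * c'"] \<open>r \<in> R\<close> \<open>c > 0\<close> \<open>c' > 0\<close> by simp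
qed

lemma exists_between_finite:
  fixes Lo Up :: "'a::linordered_field set"
  assumes "finite Lo" "finite Up" "\<And>l u. l \<in> Lo \<Longrightarrow> u \<in> Up \<Longrightarrow> l < u"
  shows "\<exists>t. (\<forall>l\<in>Lo. l < t) \<and> (\<forall>u\<in>Up. t < u)"
proof (cases "Lo = {}"; cases "Up = {}")
  assume "Lo = {}" "Up = {}"
  then show ?thesis by simp
next
  assume "Lo = {}" "Up \<noteq> {}"
  then show ?thesis using assms
    by (intro exI[of _ "Min Up - 1"]) (auto dest: Min_le[rotated])
next
  assume "Lo \<noteq> {}" "Up = {}"
  then show ?thesis using assms
    by (intro exI[of _ "Max Lo + 1"]) (auto dest: Max_ge[rotated])
next
  assume "Lo \<noteq> {}" "Up \<noteq> {}"
  then have "Max Lo < Min Up" "\<forall>l\<in>Lo. l \<le> Max Lo" "\<forall>u\<in>Up. Min Up \<le> u"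
    using assms by auto
  then show ?thesis
    by (intro exI[of _ "(Max Lo + Min Up) / 2"]) force
qed

definition separates :: "nat \<Rightarrow> (nat \<Rightarrow> rat) set \<Rightarrow> (nat \<Rightarrow> rat) set \<Rightarrow> (nat \<Rightarrow> rat) \<Rightarrow> bool" where
  "separates n R E w \<longleftrightarrow> (\<forall>e\<in>E. dotp n e w = 0) \<and> (\<forall>r\<in>R. 0 < dotp n r w)"

definition cone_meets :: "nat \<Rightarrow> (nat \<Rightarrow> rat) set \<Rightarrow> (nat \<Rightarrow> rat) set \<Rightarrow> bool" where
  "cone_meets n R E \<longleftrightarrow> (\<exists>v\<in>pos_comb R. \<exists>e\<in>E. \<forall>k<n. v k = e k)"

definition elim_coord :: "(nat \<Rightarrow> rat) \<Rightarrow> nat \<Rightarrow> (nat \<Rightarrow> rat) \<Rightarrow> (nat \<Rightarrow> rat)" where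
  "elim_coord d n v = (\<lambda>k. v k - v n / d n * d k)"

lemma rat_linear_elim_coord: "rat_linear (elim_coord d n)"
  by (simp add: rat_linear_def elim_coord_def fun_eq_iff algebra_simps add_divide_distrib)

lemma dotp_elim_coord:
  "dotp (Suc n) x (w(n := - dotp n d w / d n)) = dotp n (elim_coord d n x) w"
proof -
  have "dotp n (elim_coord d n x) w = 1 * dotp n x w + (- (x n / d n)) * dotp n d w"
    using dotp_linear[of n 1 x "- (x n / d n)" d w] by (simp add: elim_coord_def)
  then show ?thesis by (simp add: dotp_Suc)
qed

lemma separates_elim_coord:
  "separates n (elim_coord d n ` R) (elim_coord d n ` E) w
    \<Longrightarrow> separates (Suc n) R E (w(n := - dotp n d w / d n))"
  unfolding separates_def dotp_elim_coord by simp

lemma cone_meets_elim_coord: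
  assumes E: "rat_subspace E" and d: "d \<in> E" "d n \<noteq> 0"
    and meets: "cone_meets n (elim_coord d n ` R) (elim_coord d n ` E)"
  shows "cone_meets (Suc n) R E"
proof -
  obtain v' e0 where v': "v' \<in> pos_comb (elim_coord d n ` R)"
    and e0: "e0 \<in> E" "\<forall>k<n. v' k = elim_coord d n e0 k"
    using meets unfolding cone_meets_def by blast
  obtain v where v: "v \<in> pos_comb R" "v' = elim_coord d n v"
    using pos_comb_image[OF rat_linear_elim_coord v'] by blast
  \<comment> \<open>correct \<open>e0\<close> along \<open>d\<close> so that it also matches \<open>v\<close> in coordinate \<open>n\<close>\<close>
  define e where "e = (\<lambda>k. 1 * e0 k + ((v n - e0 n) / d n) * d k)"
  have "e \<in> E"
    unfolding e_def by (rule rat_subspace_lincomb[OF E e0(1) d(1)])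
  moreover have "v k = e k" if "k < Suc n" for k
  proof (cases "k = n")
    case True
    then show ?thesis using d(2) by (simp add: e_def)
  next
    case False
    with that e0(2) v(2) have "v k - v n / d n * d k = e0 k - e0 n / d n * d k"
      by (simp add: elim_coord_def)
    then show ?thesis by (simp add: e_def algebra_simps diff_divide_distrib)
  qed
  ultimately show ?thesis using v(1) unfolding cone_meets_def by blast
qed

definition fm_eliminate :: "nat \<Rightarrow> (nat \<Rightarrow> rat) set \<Rightarrow> (nat \<Rightarrow> rat) set" where
  "fm_eliminate n R = {r \<in> R. r n = 0}
     \<union> (\<lambda>(p, q). \<lambda>k. (- q n) * p k + p n * q k) ` ({p \<in> R. 0 < p n} \<times> {q \<in> R. q n < 0})"

lemma finite_fm_eliminate: "finite R \<Longrightarrow> finite (fm_eliminate n R)"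
  by (simp add: fm_eliminate_def)

lemma fm_eliminate_coord_zero: "r \<in> fm_eliminate n R \<Longrightarrow> r n = 0"
  by (auto simp: fm_eliminate_def)

lemma fm_eliminate_subset_pos_comb: "fm_eliminate n R \<subseteq> pos_comb R"
proof
  fix r assume "r \<in> fm_eliminate n R"
  then consider "r \<in> R"
    | p q where "p \<in> R" "q \<in> R" "0 < p n" "q n < 0" "r = (\<lambda>k. (- q n) * p k + p n * q k)"
    unfolding fm_eliminate_def by auto
  then show "r \<in> pos_comb R"
  proof cases
    case 1
    then show ?thesis using pos_combI[of r R 1 "\<lambda>k. 0"] nonneg_comb.zero by simp
  next
    case 2
    then have "(\<lambda>k. p n * q k + 0) \<in> nonneg_comb R"
      by (intro nonneg_comb.step nonneg_comb.zero) auto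
    then show ?thesis using 2 pos_combI[of p R "- q n"] by simp
  qed
qed

lemma separates_fm_eliminate:
  assumes R: "finite R" and E: "\<forall>e\<in>E. e n = 0" and sep: "separates n (fm_eliminate n R) E w"
  shows "\<exists>t. separates (Suc n) R E (w(n := t))"
proof -
  define Lo where "Lo = (\<lambda>p. - dotp n p w / p n) ` {p \<in> R. 0 < p n}"
  define Up where "Up = (\<lambda>q. - dotp n q w / q n) ` {q \<in> R. q n < 0}"
  have "\<exists>t. (\<forall>l\<in>Lo. l < t) \<and> (\<forall>u\<in>Up. t < u)"
  proof (rule exists_between_finite)
    show "finite Lo" "finite Up" unfolding Lo_def Up_def using R by auto
  next
    fix l u assume "l \<in> Lo" "u \<in> Up"
    then obtain p q where pq: "p \<in> R" "q \<in> R" "0 < p n" "q n < 0"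
      and l: "l = - dotp n p w / p n" and u: "u = - dotp n q w / q n"
      unfolding Lo_def Up_def by auto
    then have "(\<lambda>k. (- q n) * p k + p n * q k) \<in> fm_eliminate n R"
      unfolding fm_eliminate_def by auto
    then have "0 < dotp n (\<lambda>k. (- q n) * p k + p n * q k) w"
      using sep unfolding separates_def by blast
    then have "0 < (- q n) * dotp n p w + p n * dotp n q w"
      by (simp only: dotp_linear)
    then show "l < u" unfolding l u using pq(3,4) by (simp add: field_simps)
  qed
  then obtain t where t: "\<forall>l\<in>Lo. l < t" "\<forall>u\<in>Up. t < u" by blast
  have "0 < dotp (Suc n) r (w(n := t))" if r: "r \<in> R" for r
  proof -
    have "r n > 0 \<Longrightarrow> - dotp n r w / r n < t" "r n < 0 \<Longrightarrow> t < - dotp n r w / r n"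
      using t r unfolding Lo_def Up_def by auto
    moreover have "r n = 0 \<Longrightarrow> 0 < dotp n r w"
      using sep r unfolding separates_def fm_eliminate_def by auto
    ultimately show ?thesis
      by (cases "r n" "0::rat" rule: linorder_cases) (simp_all add: dotp_Suc field_simps)
  qed
  moreover have "\<forall>e\<in>E. dotp (Suc n) e (w(n := t)) = 0"
    using sep E by (simp add: separates_def dotp_Suc)
  ultimately show ?thesis unfolding separates_def by blast
qed

lemma cone_meets_fm_eliminate:
  assumes E: "\<forall>e\<in>E. e n = 0" and meets: "cone_meets n (fm_eliminate n R) E"
  shows "cone_meets (Suc n) R E"
proof -
  obtain v e where v: "v \<in> pos_comb (fm_eliminate n R)" and e: "e \<in> E" "\<forall>k<n. v k = e k"
    using meets unfolding cone_meets_def by blast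
  have "v \<in> pos_comb R"
    using v pos_comb_subset[OF fm_eliminate_subset_pos_comb] by blast
  moreover have "v n = 0"
    using v pos_comb_subset_nonneg_comb nonneg_comb_coord_zero fm_eliminate_coord_zero by blast
  moreover have "\<forall>k<Suc n. v k = e k"
    using e E \<open>v n = 0\<close> by (auto simp: less_Suc_eq)
  ultimately show ?thesis
    using e(1) unfolding cone_meets_def by blast
qed

theorem separates_or_cone_meets:
  assumes "finite R" "rat_subspace E"
  shows "(\<exists>w. separates n R E w) \<or> cone_meets n R E"
  using assms
proof (induction n arbitrary: R E)
  case 0
  show ?case
  proof (cases "R = {}")
    case True
    then show ?thesis by (simp add: separates_def dotp_def)
  next
    case False
    then obtain r where "r \<in> R" by blast
    then have "r \<in> pos_comb R"
      using pos_combI[of r R 1 "\<lambda>k. 0"] nonneg_comb.zero by simp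
    moreover have "(\<lambda>k. 0) \<in> E"
      using "0.prems"(2) unfolding rat_subspace_def by blast
    ultimately show ?thesis unfolding cone_meets_def by blast
  qed
next
  case (Suc n)
  show ?case
  proof (cases "\<exists>d\<in>E. d n \<noteq> 0")
    case True
    then obtain d where d: "d \<in> E" "d n \<noteq> 0" by blast
    have "(\<exists>w. separates n (elim_coord d n ` R) (elim_coord d n ` E) w)
        \<or> cone_meets n (elim_coord d n ` R) (elim_coord d n ` E)"
      using Suc rat_subspace_image[OF rat_linear_elim_coord] by blast
    then show ?thesis
      using separates_elim_coord cone_meets_elim_coord[OF Suc.prems(2) d] by blast
  next
    case False
    then have "\<forall>e\<in>E. e n = 0" by blast
    moreover have "(\<exists>w. separates n (fm_eliminate n R) E w) \<or> cone_meets n (fm_eliminate n R) E"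
      using Suc finite_fm_eliminate by blast
    ultimately show ?thesis
      using separates_fm_eliminate[OF Suc.prems(1)] cone_meets_fm_eliminate by blast
  qed
qed

section \<open>Gradings of finitely generated monoids\<close>

lemma nsmul_0 [simp]: "nsmul 0 x = 0"
  by (simp add: nsmul_def)

lemma nsmul_Suc: "nsmul (Suc p) x = nsmul p x + x"
  by (simp add: nsmul_def)

lemma nsmul_add_left: "nsmul (p + q) x = nsmul p x + nsmul q x"
  by (induction q) (simp_all add: nsmul_Suc add.assoc)

lemma nsmul_add_right: "nsmul p (x + y) = nsmul p x + nsmul p y"
  by (simp add: nsmul_def sum.distrib)

lemma nsmul_mult: "nsmul (p * q) x = nsmul p (nsmul q x)"
  by (induction p) (simp_all add: nsmul_Suc nsmul_add_left add.commute)

lemma nsmul_sum: "nsmul p (sum f A) = (\<Sum>i\<in>A. nsmul p (f i))"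
  by (induction p) (simp_all add: nsmul_Suc sum.distrib)

lemma zero_mem_mon_units: "0 \<in> mon_units"
  by (simp add: mon_units_def)

lemma add_mem_mon_units:
  assumes "a \<in> mon_units" "b \<in> mon_units"
  shows "a + b \<in> mon_units"
proof -
  obtain a' b' where "a + a' = 0" "b + b' = 0"
    using assms unfolding mon_units_def by blast
  then have "(a + b) + (a' + b') = 0"
    by (simp add: add_ac)
  then show ?thesis unfolding mon_units_def by blast
qed

lemma mon_units_add_left: "a + b \<in> mon_units \<Longrightarrow> a \<in> mon_units"
  unfolding mon_units_def by (auto simp: add.assoc)

lemma nsmul_mem_mon_units: "a \<in> mon_units \<Longrightarrow> nsmul p a \<in> mon_units"
  by (induction p) (simp_all add: nsmul_Suc zero_mem_mon_units add_mem_mon_units)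

lemma sum_mem_mon_units: "(\<And>k. k \<in> A \<Longrightarrow> f k \<in> mon_units) \<Longrightarrow> sum f A \<in> mon_units"
  by (induction A rule: infinite_finite_induct) (simp_all add: zero_mem_mon_units add_mem_mon_units)

lemma mon_units_inverse: "a \<in> mon_units \<Longrightarrow> \<exists>b\<in>mon_units. a + b = 0"
  unfolding mon_units_def by (auto simp: add.commute)

definition lincomb :: "nat \<Rightarrow> (nat \<Rightarrow> 'm) \<Rightarrow> (nat \<Rightarrow> nat) \<Rightarrow> 'm::comm_monoid_add" where
  "lincomb n g a = (\<Sum>i<n. nsmul (a i) (g i))"

lemma lincomb_zero: "lincomb n g (\<lambda>k. 0) = 0"
  by (simp add: lincomb_def nsmul_def)

lemma lincomb_add: "lincomb n g (\<lambda>k. a k + b k) = lincomb n g a + lincomb n g b"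
  by (simp add: lincomb_def nsmul_add_left sum.distrib)

lemma lincomb_scale: "lincomb n g (\<lambda>k. p * a k) = nsmul p (lincomb n g a)"
  by (simp add: lincomb_def nsmul_mult nsmul_sum)

lemma lincomb_cong: "(\<And>k. k < n \<Longrightarrow> a k = b k) \<Longrightarrow> lincomb n g a = lincomb n g b"
  by (simp add: lincomb_def)

lemma lincomb_indicator:
  assumes "j < n"
  shows "lincomb n g (\<lambda>k. if k = j then 1 else 0) = g j"
proof -
  have "(\<lambda>i. nsmul (if i = j then 1 else 0) (g i)) = (\<lambda>i. if i = j then g i else 0)"
    by (simp add: fun_eq_iff nsmul_def)
  then show ?thesis
    unfolding lincomb_def using assms by (simp only:) simp
qed

lemma lincomb_mem_mon_units:
  assumes "lincomb n g a \<in> mon_units" "i < n" "a i > 0"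
  shows "g i \<in> mon_units"
proof -
  obtain p where p: "a i = Suc p"
    using assms(3) not0_implies_Suc by blast
  have "lincomb n g a = nsmul (a i) (g i) + (\<Sum>k\<in>{..<n} - {i}. nsmul (a k) (g k))"
    unfolding lincomb_def using assms(2) by (simp add: sum.remove)
  also have "\<dots> = g i + (nsmul p (g i) + (\<Sum>k\<in>{..<n} - {i}. nsmul (a k) (g k)))"
    unfolding p nsmul_Suc by (simp add: add_ac)
  finally have "g i + (nsmul p (g i) + (\<Sum>k\<in>{..<n} - {i}. nsmul (a k) (g k))) \<in> mon_units"
    using assms(1) by simp
  then show ?thesis
    by (rule mon_units_add_left)
qed

lemma lincomb_of_mon_gen:
  "m \<in> mon_gen (g ` {..<n}) \<Longrightarrow> \<exists>a. lincomb n g a = m"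
proof (induction m rule: mon_gen.induct)
  case zero
  then show ?case using lincomb_zero by blast
next
  case (gen s)
  then show ?case using lincomb_indicator by blast
next
  case (add x y)
  then obtain a b where "lincomb n g a = x" "lincomb n g b = y" by blast
  then show ?case using lincomb_add[of n g a b] by blast
qed

definition unit_vec :: "nat \<Rightarrow> nat \<Rightarrow> rat" where
  "unit_vec j = (\<lambda>k. if k = j then 1 else 0)"

lemma dotp_unit_vec: "j < n \<Longrightarrow> dotp n (unit_vec j) w = w j"
  by (simp add: dotp_def unit_vec_def if_distrib[of "\<lambda>x. x * _"] cong: if_cong)

lemma nonneg_comb_unit_vec_nonneg: "u \<in> nonneg_comb (unit_vec ` A) \<Longrightarrow> 0 \<le> u k"
  by (induction u rule: nonneg_comb.induct) (auto simp: unit_vec_def)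

lemma exists_common_denominator:
  fixes w :: "nat \<Rightarrow> rat"
  shows "\<exists>D::nat. D > 0 \<and> (\<forall>k<n. of_nat D * w k \<in> \<int>)"
proof (induction n)
  case 0
  then show ?case by (intro exI[of _ 1]) auto
next
  case (Suc n)
  then obtain D where D: "D > 0" "\<forall>k<n. of_nat D * w k \<in> \<int>" by blast
  obtain p q where pq: "quotient_of (w n) = (p, q)" by (cases "quotient_of (w n)")
  have q: "q > 0" using quotient_of_denom_pos[OF pq] .
  have wn: "w n = of_int p / of_int q" using quotient_of_div[OF pq] .
  have "of_nat (D * nat q) * w k \<in> \<int>" if "k < Suc n" for k
  proof (cases "k = n")
    case True
    have "of_nat (D * nat q) * w k = of_nat D * of_int p"
      using q by (simp add: True wn of_nat_mult of_nat_nat)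
    then show ?thesis by (metis Ints_mult Ints_of_int Ints_of_nat)
  next
    case False
    have "of_nat (D * nat q) * w k = of_int q * (of_nat D * w k)"
      using q by (simp add: of_nat_mult of_nat_nat mult_ac)
    moreover have "of_nat D * w k \<in> \<int>"
      using D(2) False that by simp
    ultimately show ?thesis by (metis Ints_mult Ints_of_int)
  qed
  then show ?case using D(1) q by (intro exI[of _ "D * nat q"]) simp
qed

lemma exists_nat_multiple:
  fixes w :: "nat \<Rightarrow> rat"
  assumes "\<And>k. k < n \<Longrightarrow> 0 \<le> w k"
  obtains D :: nat and W :: "nat \<Rightarrow> nat"
  where "D > 0" "\<forall>k<n. of_nat (W k) = of_nat D * w k"
proof -
  obtain D :: nat where D: "D > 0" "\<forall>k<n. of_nat D * w k \<in> \<int>"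
    using exists_common_denominator by blast
  have "of_nat (nat \<lfloor>of_nat D * w k\<rfloor>) = of_nat D * w k" if k: "k < n" for k
  proof -
    obtain z where z: "of_nat D * w k = of_int z"
      using D(2) k by (auto elim: Ints_cases)
    have "(0::rat) \<le> of_int z"
      unfolding z[symmetric] using assms[OF k] by simp
    then show ?thesis
      unfolding z by simp
  qed
  then have "\<forall>k<n. of_nat (nat \<lfloor>of_nat D * w k\<rfloor>) = of_nat D * w k"
    by blast
  then show ?thesis
    by (rule that[OF D(1)])
qed

text \<open>The rational span of the relations among the generators modulo units:
  \<open>D x = a - b\<close> for a relation \<open>\<Sum> a\<^sub>i g\<^sub>i = \<Sum> b\<^sub>i g\<^sub>i + u\<close> with \<open>u\<close> a unit.\<close>

definition unit_relations :: "nat \<Rightarrow> (nat \<Rightarrow> 'm::comm_monoid_add) \<Rightarrow> (nat \<Rightarrow> rat) set" where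
  "unit_relations n g = {x. \<exists>D>0. \<exists>a b u. u \<in> mon_units \<and> lincomb n g a = lincomb n g b + u
     \<and> (\<forall>k. of_nat D * x k = of_nat (a k) - of_nat (b k))}"

lemma unit_relationsI:
  "D > 0 \<Longrightarrow> u \<in> mon_units \<Longrightarrow> lincomb n g a = lincomb n g b + u
    \<Longrightarrow> (\<And>k. of_nat D * x k = of_nat (a k) - of_nat (b k)) \<Longrightarrow> x \<in> unit_relations n g"
  unfolding unit_relations_def by blast

lemma unit_relationsE:
  assumes "x \<in> unit_relations n g"
  obtains D u a b where "D > 0" "u \<in> mon_units" "lincomb n g a = lincomb n g b + u"
    "\<And>k. of_nat D * x k = of_nat (a k) - of_nat (b k)"
  using assms unfolding unit_relations_def by blast

lemma unit_relations_add:
  assumes "x \<in> unit_relations n g" "y \<in> unit_relations n g"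
  shows "(\<lambda>k. x k + y k) \<in> unit_relations n g"
proof -
  obtain D1 a1 b1 u1 where 1: "D1 > 0" "u1 \<in> mon_units" "lincomb n g a1 = lincomb n g b1 + u1"
    "\<And>k. of_nat D1 * x k = of_nat (a1 k) - of_nat (b1 k)"
    using assms(1) by (rule unit_relationsE) blast
  obtain D2 a2 b2 u2 where 2: "D2 > 0" "u2 \<in> mon_units" "lincomb n g a2 = lincomb n g b2 + u2"
    "\<And>k. of_nat D2 * y k = of_nat (a2 k) - of_nat (b2 k)"
    using assms(2) by (rule unit_relationsE) blast
  have "lincomb n g (\<lambda>k. D2 * a1 k + D1 * a2 k)
      = lincomb n g (\<lambda>k. D2 * b1 k + D1 * b2 k) + (nsmul D2 u1 + nsmul D1 u2)"
    using 1(3) 2(3) by (simp add: lincomb_add lincomb_scale nsmul_add_right add_ac)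
  moreover have "nsmul D2 u1 + nsmul D1 u2 \<in> mon_units"
    using 1(2) 2(2) by (simp add: add_mem_mon_units nsmul_mem_mon_units)
  moreover have "of_nat (D1 * D2) * (x k + y k)
      = of_nat (D2 * a1 k + D1 * a2 k) - of_nat (D2 * b1 k + D1 * b2 k)" for k
  proof -
    have "of_nat (D1 * D2) * (x k + y k) = of_nat D2 * (of_nat D1 * x k) + of_nat D1 * (of_nat D2 * y k)"
      by (simp add: algebra_simps)
    also have "\<dots> = of_nat D2 * (of_nat (a1 k) - of_nat (b1 k)) + of_nat D1 * (of_nat (a2 k) - of_nat (b2 k))"
      by (simp only: 1(4) 2(4))
    also have "\<dots> = of_nat (D2 * a1 k + D1 * a2 k) - of_nat (D2 * b1 k + D1 * b2 k)"
      by (simp add: algebra_simps)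
    finally show ?thesis .
  qed
  ultimately show ?thesis
    using 1(1) 2(1) by (intro unit_relationsI[of "D1 * D2"]) auto
qed

lemma unit_relations_scale_nat:
  assumes "x \<in> unit_relations n g"
  shows "(\<lambda>k. of_nat m * x k) \<in> unit_relations n g"
proof -
  obtain D a b u where *: "D > 0" "u \<in> mon_units" "lincomb n g a = lincomb n g b + u"
    "\<And>k. of_nat D * x k = of_nat (a k) - of_nat (b k)"
    using assms by (rule unit_relationsE) blast
  have "lincomb n g (\<lambda>k. m * a k) = lincomb n g (\<lambda>k. m * b k) + nsmul m u"
    using *(3) by (simp add: lincomb_scale nsmul_add_right)
  moreover have "of_nat D * (of_nat m * x k) = of_nat (m * a k) - of_nat (m * b k)" for k
    by (simp only: mult.left_commute[of "of_nat D"] *(4)) (simp add: algebra_simps)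
  ultimately show ?thesis
    using *(1,2) nsmul_mem_mon_units by (intro unit_relationsI) auto
qed

lemma unit_relations_divide_nat:
  assumes "x \<in> unit_relations n g" "q > 0"
  shows "(\<lambda>k. x k / of_nat q) \<in> unit_relations n g"
proof -
  obtain D a b u where *: "D > 0" "u \<in> mon_units" "lincomb n g a = lincomb n g b + u"
    "\<And>k. of_nat D * x k = of_nat (a k) - of_nat (b k)"
    using assms(1) by (rule unit_relationsE) blast
  have "of_nat (D * q) * (x k / of_nat q) = of_nat (a k) - of_nat (b k)" for k
    using *(4)[of k] assms(2) by simp
  then show ?thesis
    using *(1-3) assms(2) by (intro unit_relationsI[of "D * q"]) auto
qed

lemma unit_relations_uminus:
  assumes "x \<in> unit_relations n g"
  shows "(\<lambda>k. - x k) \<in> unit_relations n g"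
proof -
  obtain D a b u where *: "D > 0" "u \<in> mon_units" "lincomb n g a = lincomb n g b + u"
    "\<And>k. of_nat D * x k = of_nat (a k) - of_nat (b k)"
    using assms by (rule unit_relationsE) blast
  obtain u' where u': "u' \<in> mon_units" "u + u' = 0"
    using mon_units_inverse[OF *(2)] by blast
  have "lincomb n g b = lincomb n g a + u'"
    using *(3) u'(2) by (simp add: add.assoc)
  moreover have "of_nat D * - x k = of_nat (b k) - of_nat (a k)" for k
    using *(4)[of k] by simp
  ultimately show ?thesis
    using *(1) u'(1) by (intro unit_relationsI) auto
qed

lemma unit_relations_scale:
  assumes "x \<in> unit_relations n g"
  shows "(\<lambda>k. c * x k) \<in> unit_relations n g"
proof -
  obtain p q where pq: "quotient_of c = (p, q)" by (cases "quotient_of c")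
  have q: "nat q > 0" using quotient_of_denom_pos[OF pq] by simp
  have c: "c = of_int p / of_int q" using quotient_of_div[OF pq] .
  have x': "(\<lambda>k. of_nat (nat \<bar>p\<bar>) * x k / of_nat (nat q)) \<in> unit_relations n g"
    using unit_relations_divide_nat[OF unit_relations_scale_nat[OF assms] q] .
  show ?thesis
  proof (cases "p \<ge> 0")
    case True
    then have "(\<lambda>k. c * x k) = (\<lambda>k. of_nat (nat \<bar>p\<bar>) * x k / of_nat (nat q))"
      using q by (simp add: c)
    then show ?thesis using x' by simp
  next
    case False
    then have "(\<lambda>k. c * x k) = (\<lambda>k. - (of_nat (nat \<bar>p\<bar>) * x k / of_nat (nat q)))"
      using q by (simp add: c)
    then show ?thesis using unit_relations_uminus[OF x'] by simp
  qed
qed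

lemma rat_subspace_unit_relations: "rat_subspace (unit_relations n g)"
  unfolding rat_subspace_def
proof (intro conjI ballI allI)
  show "(\<lambda>k. 0) \<in> unit_relations n g"
    using zero_mem_mon_units by (intro unit_relationsI[of 1 0 n g "\<lambda>k. 0" "\<lambda>k. 0"]) auto
next
  fix x y a b assume "x \<in> unit_relations n g" "y \<in> unit_relations n g"
  then show "(\<lambda>k. a * x k + b * y k) \<in> unit_relations n g"
    using unit_relations_add unit_relations_scale by blast
qed

lemma not_cone_meets_unit_relations:
  fixes g :: "nat \<Rightarrow> 'm::cancel_comm_monoid_add"
  shows "\<not> cone_meets n (unit_vec ` {i. i < n \<and> g i \<notin> mon_units}) (unit_relations n g)"
proof
  assume "cone_meets n (unit_vec ` {i. i < n \<and> g i \<notin> mon_units}) (unit_relations n g)"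
  then obtain v x where v: "v \<in> pos_comb (unit_vec ` {i. i < n \<and> g i \<notin> mon_units})"
    and x: "x \<in> unit_relations n g" "\<forall>k<n. v k = x k"
    unfolding cone_meets_def by blast
  then obtain i c u where i: "i < n" "g i \<notin> mon_units" and "c > 0"
    and u: "u \<in> nonneg_comb (unit_vec ` {i. i < n \<and> g i \<notin> mon_units})"
    and v_eq: "v = (\<lambda>k. c * unit_vec i k + u k)"
    unfolding pos_comb_def by blast
  have v_nonneg: "0 \<le> v k" for k
    using nonneg_comb_unit_vec_nonneg[OF u, of k] \<open>c > 0\<close> by (simp add: v_eq unit_vec_def)
  have "0 < v i"
    using nonneg_comb_unit_vec_nonneg[OF u, of i] \<open>c > 0\<close> by (simp add: v_eq unit_vec_def)
  obtain D u0 a b where D: "D > 0" "u0 \<in> mon_units" "lincomb n g a = lincomb n g b + u0"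
    "\<And>k. of_nat D * x k = of_nat (a k) - of_nat (b k)"
    using x(1) by (rule unit_relationsE) blast
  \<comment> \<open>Since \<open>a - b = D v \<ge> 0\<close>, cancelling \<open>b\<close> leaves the unit \<open>u0\<close> as a combination
    of the generators in which the non-unit \<open>g i\<close> occurs.\<close>
  define d where "d k = a k - b k" for k
  have a_eq: "a k = b k + d k" and d_eq: "of_nat (d k) = of_nat D * v k" if "k < n" for k
  proof -
    have "of_nat D * v k = of_nat (a k) - of_nat (b k)"
      using D(4) x(2) that by simp
    moreover have "0 \<le> of_nat D * v k"
      using v_nonneg[of k] by simp
    ultimately show "a k = b k + d k" "of_nat (d k) = of_nat D * v k"
      unfolding d_def by (simp_all add: of_nat_diff)
  qed
  have "lincomb n g b + lincomb n g d = lincomb n g b + u0"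
    using lincomb_cong[of n a "\<lambda>k. b k + d k" g] a_eq D(3) by (simp add: lincomb_add)
  then have "lincomb n g d \<in> mon_units"
    using D(2) by simp
  moreover have "d i > 0"
  proof -
    have "(0::rat) < of_nat D * v i"
      using \<open>0 < v i\<close> D(1) by simp
    then show ?thesis
      using d_eq[OF i(1)] by simp
  qed
  ultimately show False
    using lincomb_mem_mon_units i by blast
qed

lemma separates_nat_weights:
  fixes g :: "nat \<Rightarrow> 'm::comm_monoid_add"
  assumes sep: "separates n (unit_vec ` {i. i < n \<and> g i \<notin> mon_units}) (unit_relations n g) w"
  shows "\<exists>W::nat \<Rightarrow> nat. (\<forall>i<n. W i = 0 \<longleftrightarrow> g i \<in> mon_units)
    \<and> (\<forall>a b. lincomb n g a = lincomb n g b \<longrightarrow> (\<Sum>k<n. a k * W k) = (\<Sum>k<n. b k * W k))"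
proof -
  have w_pos: "0 < w i" if "i < n" "g i \<notin> mon_units" for i
    using sep that dotp_unit_vec[of i n w] unfolding separates_def by auto
  have w_zero: "w j = 0" if "j < n" "g j \<in> mon_units" for j
  proof -
    have "unit_vec j \<in> unit_relations n g"
      using that lincomb_indicator[of j n g] lincomb_zero[of n g]
      by (intro unit_relationsI[of 1 "g j" n g "\<lambda>k. if k = j then 1 else 0" "\<lambda>k. 0"])
        (auto simp: unit_vec_def)
    then show ?thesis
      using sep dotp_unit_vec[OF that(1)] unfolding separates_def by auto
  qed
  have w_nonneg: "0 \<le> w k" if "k < n" for k
    using w_pos w_zero that by (cases "g k \<in> mon_units") (auto intro: less_imp_le)
  obtain D W where D: "D > 0" and "\<forall>k<n. of_nat (W k) = of_nat D * w k"
    by (rule exists_nat_multiple[of n w, OF w_nonneg])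
  then have W: "of_nat (W k) = of_nat D * w k" if "k < n" for k
    using that by blast
  have "W i = 0 \<longleftrightarrow> g i \<in> mon_units" if "i < n" for i
  proof -
    have "W i = 0 \<longleftrightarrow> (of_nat (W i) :: rat) = 0"
      by simp
    also have "\<dots> \<longleftrightarrow> w i = 0"
      using W[OF that] D(1) by simp
    finally show ?thesis
      using w_pos[OF that] w_zero[OF that] by (cases "g i \<in> mon_units") auto
  qed
  moreover have "(\<Sum>k<n. a k * W k) = (\<Sum>k<n. b k * W k)" if "lincomb n g a = lincomb n g b" for a b
  proof -
    have "(\<lambda>k. of_nat (a k) - of_nat (b k)) \<in> unit_relations n g"
      using that zero_mem_mon_units by (intro unit_relationsI[of 1 0]) auto
    then have "dotp n (\<lambda>k. of_nat (a k) - of_nat (b k)) w = 0"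
      using sep unfolding separates_def by blast
    then have "(\<Sum>k<n. of_nat (a k) * w k) = (\<Sum>k<n. of_nat (b k) * w k)"
      by (simp add: dotp_def algebra_simps sum_subtractf)
    then have "(of_nat D :: rat) * (\<Sum>k<n. of_nat (a k) * w k) = of_nat D * (\<Sum>k<n. of_nat (b k) * w k)"
      by simp
    then have "(of_nat (\<Sum>k<n. a k * W k) :: rat) = of_nat (\<Sum>k<n. b k * W k)"
      by (simp add: W sum_distrib_left mult_ac)
    then show ?thesis by (simp only: of_nat_eq_iff)
  qed
  ultimately show ?thesis by blast
qed

definition positive_grading :: "('m::comm_monoid_add \<Rightarrow> nat) \<Rightarrow> bool" where
  "positive_grading \<phi> \<longleftrightarrow> (\<forall>a b. \<phi> (a + b) = \<phi> a + \<phi> b) \<and> (\<forall>m. \<phi> m = 0 \<longleftrightarrow> m \<in> mon_units)"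

lemma nat_weights_positive_grading:
  fixes g :: "nat \<Rightarrow> 'm::comm_monoid_add"
  assumes surj: "\<And>m. \<exists>a. lincomb n g a = m"
    and W_zero: "\<And>i. i < n \<Longrightarrow> W i = 0 \<longleftrightarrow> g i \<in> mon_units"
    and W_rel: "\<And>a b. lincomb n g a = lincomb n g b \<Longrightarrow> (\<Sum>k<n. a k * W k) = (\<Sum>k<n. b k * W k)"
  shows "\<exists>\<phi>::'m \<Rightarrow> nat. positive_grading \<phi>"
proof -
  define rep where "rep m = (SOME a. lincomb n g a = m)" for m
  have rep: "lincomb n g (rep m) = m" for m
    unfolding rep_def using someI_ex[OF surj] .
  define \<phi> where "\<phi> m = (\<Sum>k<n. rep m k * W k)" for m
  have \<phi>: "\<phi> m = (\<Sum>k<n. a k * W k)" if "lincomb n g a = m" for a m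
    unfolding \<phi>_def using W_rel[of a "rep m"] rep[of m] that by simp
  have add: "\<phi> (x + y) = \<phi> x + \<phi> y" for x y
  proof -
    have "\<phi> (x + y) = (\<Sum>k<n. (rep x k + rep y k) * W k)"
      by (rule \<phi>) (simp add: lincomb_add rep)
    then show ?thesis
      unfolding \<phi>_def by (simp add: sum.distrib add_mult_distrib)
  qed
  have "\<phi> m = 0 \<longleftrightarrow> m \<in> mon_units" for m
  proof
    assume "\<phi> m = 0"
    then have "rep m k = 0 \<or> g k \<in> mon_units" if "k < n" for k
      using that W_zero unfolding \<phi>_def by simp
    then have "nsmul (rep m k) (g k) \<in> mon_units" if "k \<in> {..<n}" for k
      using that by (metis lessThan_iff nsmul_0 nsmul_mem_mon_units zero_mem_mon_units)
    then have "lincomb n g (rep m) \<in> mon_units"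
      unfolding lincomb_def by (rule sum_mem_mon_units)
    then show "m \<in> mon_units"
      using rep by simp
  next
    assume "m \<in> mon_units"
    then obtain m' where "m + m' = 0"
      unfolding mon_units_def by blast
    then have "\<phi> m + \<phi> m' = \<phi> 0"
      using add[of m m'] by simp
    moreover have "\<phi> 0 = 0"
      using add[of 0 0] by simp
    ultimately show "\<phi> m = 0"
      by simp
  qed
  then show ?thesis
    unfolding positive_grading_def using add by blast
qed

theorem fin_gen_monoid_positive_grading:
  assumes "fin_gen_monoid TYPE('m::cancel_comm_monoid_add)"
  shows "\<exists>\<phi>::'m \<Rightarrow> nat. positive_grading \<phi>"
proof -
  obtain S :: "'m set" where "finite S" "mon_gen S = UNIV"
    using assms unfolding fin_gen_monoid_def by blast
  moreover obtain n and g :: "nat \<Rightarrow> 'm" where "S = g ` {i. i < n}"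
    using finite_imp_nat_seg_image_inj_on[OF \<open>finite S\<close>] by blast
  ultimately have "mon_gen (g ` {..<n}) = UNIV"
    by (simp add: lessThan_def)
  then have surj: "\<exists>a. lincomb n g a = m" for m
    using lincomb_of_mon_gen by blast
  define R where "R = unit_vec ` {i. i < n \<and> g i \<notin> mon_units}"
  have "finite R"
    unfolding R_def by simp
  have "(\<exists>w. separates n R (unit_relations n g) w) \<or> cone_meets n R (unit_relations n g)"
    using separates_or_cone_meets[OF \<open>finite R\<close> rat_subspace_unit_relations] .
  moreover have "\<not> cone_meets n R (unit_relations n g)"
    unfolding R_def by (rule not_cone_meets_unit_relations)
  ultimately obtain w where "separates n R (unit_relations n g) w"
    by blast
  from separates_nat_weights[OF this[unfolded R_def]] obtain W where
    "\<forall>i<n. W i = 0 \<longleftrightarrow> g i \<in> mon_units"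
    "\<forall>a b. lincomb n g a = lincomb n g b \<longrightarrow> (\<Sum>k<n. a k * W k) = (\<Sum>k<n. b k * W k)"
    by blast
  then show ?thesis
    using nat_weights_positive_grading[OF surj, of W] by blast
qed

section \<open>Monoid algebras and the homotopy\<close>

lemma poly_mapping_sum_single:
  "(\<Sum>m\<in>Poly_Mapping.keys f. Poly_Mapping.single m (Poly_Mapping.lookup f m)) = f"
proof (rule poly_mapping_eqI)
  fix k
  have "Poly_Mapping.lookup (\<Sum>m\<in>Poly_Mapping.keys f. Poly_Mapping.single m (Poly_Mapping.lookup f m)) k
      = (\<Sum>m\<in>Poly_Mapping.keys f. if m = k then Poly_Mapping.lookup f m else 0)"
    by (simp add: lookup_sum lookup_single when_def)
  also have "\<dots> = Poly_Mapping.lookup f k"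
    by (simp add: in_keys_iff)
  finally show "Poly_Mapping.lookup (\<Sum>m\<in>Poly_Mapping.keys f. Poly_Mapping.single m (Poly_Mapping.lookup f m)) k
      = Poly_Mapping.lookup f k" .
qed

lemma alg_ind_add: "alg_ind g (f + f') = alg_ind g f + alg_ind g f'"
  unfolding alg_ind_def
  by (rule setsum_keys_plus_distrib) (simp_all add: single_add split: option.split)

lemma alg_ind_zero [simp]: "alg_ind g 0 = 0"
  by (simp add: alg_ind_def)

lemma alg_ind_sum: "alg_ind g (sum F A) = (\<Sum>i\<in>A. alg_ind g (F i))"
  by (induction A rule: infinite_finite_induct) (simp_all add: alg_ind_add)

lemma alg_ind_single:
  "alg_ind g (Poly_Mapping.single a c)
     = (case g a of None \<Rightarrow> 0 | Some n \<Rightarrow> Poly_Mapping.single n c)"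
  by (cases "c = 0") (simp_all add: alg_ind_def split: option.split)

lemma alg_ind_Some: "alg_ind Some f = f"
  by (simp add: alg_ind_def poly_mapping_sum_single)

lemma alg_ind_alg_ind: "alg_ind g (alg_ind h f) = alg_ind (\<lambda>m. Option.bind (h m) g) f"
proof -
  have "alg_ind g (alg_ind h f) = (\<Sum>m\<in>Poly_Mapping.keys f.
      alg_ind g (case h m of None \<Rightarrow> 0 | Some n \<Rightarrow> Poly_Mapping.single n (Poly_Mapping.lookup f m)))"
    unfolding alg_ind_def[of h] by (rule alg_ind_sum)
  also have "\<dots> = alg_ind (\<lambda>m. Option.bind (h m) g) f"
    unfolding alg_ind_def[of "\<lambda>m. Option.bind (h m) g"]
    by (intro sum.cong refl) (simp add: alg_ind_single split: option.split)
  finally show ?thesis .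
qed

definition weight_lift :: "('m \<Rightarrow> nat) \<Rightarrow> ('m \<Rightarrow>\<^sub>0 'k::comm_monoid_add) \<Rightarrow> ('m \<Rightarrow>\<^sub>0 'k) poly" where
  "weight_lift \<phi> f =
     (\<Sum>m\<in>Poly_Mapping.keys f. monom (Poly_Mapping.single m (Poly_Mapping.lookup f m)) (\<phi> m))"

lemma weight_lift_add: "weight_lift \<phi> (f + f') = weight_lift \<phi> f + weight_lift \<phi> f'"
  unfolding weight_lift_def
  by (rule setsum_keys_plus_distrib) (simp_all add: single_add add_monom)

lemma weight_lift_zero [simp]: "weight_lift \<phi> 0 = 0"
  by (simp add: weight_lift_def)

lemma weight_lift_sum: "weight_lift \<phi> (sum F A) = (\<Sum>i\<in>A. weight_lift \<phi> (F i))"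
  by (induction A rule: infinite_finite_induct) (simp_all add: weight_lift_add)

lemma weight_lift_single:
  "weight_lift \<phi> (Poly_Mapping.single a c) = monom (Poly_Mapping.single a c) (\<phi> a)"
  by (cases "c = 0") (simp_all add: weight_lift_def)

lemma weight_lift_mult:
  fixes f f' :: "'m::comm_monoid_add \<Rightarrow>\<^sub>0 'k::comm_ring_1"
  assumes \<phi>: "\<And>a b. \<phi> (a + b) = \<phi> a + \<phi> b"
  shows "weight_lift \<phi> (f * f') = weight_lift \<phi> f * weight_lift \<phi> f'"
proof -
  let ?s = "\<lambda>f m. Poly_Mapping.single m (Poly_Mapping.lookup f m)"
  have "f * f' = (\<Sum>a\<in>Poly_Mapping.keys f. ?s f a) * (\<Sum>b\<in>Poly_Mapping.keys f'. ?s f' b)"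
    by (simp only: poly_mapping_sum_single)
  also have "\<dots> = (\<Sum>a\<in>Poly_Mapping.keys f. \<Sum>b\<in>Poly_Mapping.keys f'. ?s f a * ?s f' b)"
    by (rule sum_product)
  finally have "weight_lift \<phi> (f * f') = (\<Sum>a\<in>Poly_Mapping.keys f. \<Sum>b\<in>Poly_Mapping.keys f'.
      weight_lift \<phi> (?s f a) * weight_lift \<phi> (?s f' b))"
    by (simp add: weight_lift_sum mult_single weight_lift_single mult_monom \<phi>)
  also have "\<dots> = weight_lift \<phi> (\<Sum>a\<in>Poly_Mapping.keys f. ?s f a)
      * weight_lift \<phi> (\<Sum>b\<in>Poly_Mapping.keys f'. ?s f' b)"
    by (simp only: weight_lift_sum sum_product)
  finally show ?thesis
    by (simp only: poly_mapping_sum_single)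
qed

lemma kalg_hom_weight_lift:
  assumes \<phi>: "\<And>a b. \<phi> (a + b) = \<phi> a + \<phi> b"
  shows "kalg_hom kmon kmon_poly
    (weight_lift \<phi> :: ('m::comm_monoid_add \<Rightarrow>\<^sub>0 'k::comm_ring_1) \<Rightarrow> ('m \<Rightarrow>\<^sub>0 'k) poly)"
proof -
  have "\<phi> 0 = 0"
    using \<phi>[of 0 0] by simp
  then have lift_kmon: "weight_lift \<phi> (kmon c :: 'm \<Rightarrow>\<^sub>0 'k) = kmon_poly c" for c
    by (simp add: kmon_def kmon_poly_def weight_lift_single monom_0)
  moreover have "weight_lift \<phi> (1 :: 'm \<Rightarrow>\<^sub>0 'k) = 1"
    using lift_kmon[of 1] by (simp add: kmon_def kmon_poly_def pCons_one)
  ultimately show ?thesis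
    unfolding kalg_hom_def by (simp add: weight_lift_add weight_lift_mult[OF \<phi>])
qed

lemma poly_weight_lift:
  fixes f :: "'m::comm_monoid_add \<Rightarrow>\<^sub>0 'k::comm_ring_1"
  shows "poly (weight_lift \<phi> f) x
     = (\<Sum>m\<in>Poly_Mapping.keys f. Poly_Mapping.single m (Poly_Mapping.lookup f m) * x ^ \<phi> m)"
  by (simp add: weight_lift_def poly_sum poly_monom)

lemma naive_htpy_step_degree_zero:
  fixes \<phi> :: "'m::comm_monoid_add \<Rightarrow> nat"
  assumes \<phi>: "\<And>a b. \<phi> (a + b) = \<phi> a + \<phi> b"
  shows "naive_htpy_step
    (alg_ind (\<lambda>m. if \<phi> m = 0 then Some m else None) :: ('m \<Rightarrow>\<^sub>0 'k::field) \<Rightarrow> _) id"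
proof -
  have "(\<lambda>f. poly (weight_lift \<phi> f) 0) = alg_ind (\<lambda>m. if \<phi> m = 0 then Some m else None)"
    by (simp add: fun_eq_iff poly_weight_lift alg_ind_def power_0_left if_distrib cong: if_cong)
  moreover have "(\<lambda>f. poly (weight_lift \<phi> f) 1) = (id :: ('m \<Rightarrow>\<^sub>0 'k) \<Rightarrow> _)"
    by (simp add: fun_eq_iff poly_weight_lift poly_mapping_sum_single)
  ultimately show ?thesis
    unfolding naive_htpy_step_def using kalg_hom_weight_lift[OF \<phi>] by blast
qed

theorem lemma1p5:
  fixes \<iota> :: "'u::ab_group_add \<Rightarrow> 'm::cancel_comm_monoid_add"
  assumes fg: "fin_gen_monoid TYPE('m)"
    and tf: "gp_torsion_free TYPE('m)"
    and inj: "inj \<iota>"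
    and hom_add: "\<And>a b. \<iota> (a + b) = \<iota> a + \<iota> b"
    and hom_zero: "\<iota> 0 = 0"
    and units: "range \<iota> = mon_units"
  shows "(alg_ind (unit_retr \<iota>) :: ('m \<Rightarrow>\<^sub>0 'k::field) \<Rightarrow> ('u \<Rightarrow>\<^sub>0 'k))
           \<circ> alg_ind (Some \<circ> \<iota>) = id
       \<and> naive_A1_homotopic
           ((alg_ind (Some \<circ> \<iota>) :: ('u \<Rightarrow>\<^sub>0 'k) \<Rightarrow> ('m \<Rightarrow>\<^sub>0 'k)) \<circ> alg_ind (unit_retr \<iota>)) id"
proof
  have "unit_retr \<iota> (\<iota> u) = Some u" for u
    by (simp add: unit_retr_def inv_f_f[OF inj])
  then show "(alg_ind (unit_retr \<iota>) :: ('m \<Rightarrow>\<^sub>0 'k) \<Rightarrow> ('u \<Rightarrow>\<^sub>0 'k)) \<circ> alg_ind (Some \<circ> \<iota>) = id"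
    by (simp add: fun_eq_iff alg_ind_alg_ind alg_ind_Some)
next
  obtain \<phi> :: "'m \<Rightarrow> nat" where \<phi>: "positive_grading \<phi>"
    using fin_gen_monoid_positive_grading[OF fg] by blast
  have "Option.bind (unit_retr \<iota> m) (Some \<circ> \<iota>) = (if \<phi> m = 0 then Some m else None)" for m
    using \<phi> units by (auto simp: unit_retr_def positive_grading_def f_inv_into_f)
  then have i_comp_pi: "(alg_ind (Some \<circ> \<iota>) :: ('u \<Rightarrow>\<^sub>0 'k) \<Rightarrow> ('m \<Rightarrow>\<^sub>0 'k)) \<circ> alg_ind (unit_retr \<iota>)
      = alg_ind (\<lambda>m. if \<phi> m = 0 then Some m else None)"
    by (simp add: fun_eq_iff alg_ind_alg_ind)
  have "\<And>a b. \<phi> (a + b) = \<phi> a + \<phi> b"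
    using \<phi> unfolding positive_grading_def by blast
  then have "naive_htpy_step
      ((alg_ind (Some \<circ> \<iota>) :: ('u \<Rightarrow>\<^sub>0 'k) \<Rightarrow> ('m \<Rightarrow>\<^sub>0 'k)) \<circ> alg_ind (unit_retr \<iota>)) id"
    unfolding i_comp_pi by (rule naive_htpy_step_degree_zero)
  then show "naive_A1_homotopic
      ((alg_ind (Some \<circ> \<iota>) :: ('u \<Rightarrow>\<^sub>0 'k) \<Rightarrow> ('m \<Rightarrow>\<^sub>0 'k)) \<circ> alg_ind (unit_retr \<iota>)) id"
    unfolding naive_A1_homotopic_def by blast
qed

end
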